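(* Let $X$ be a real locally convex Hausdorff topological vector space with topological dual $X^*$. A nonempty subset $D\subset X$ is a convex polyhedron in $X$ if and only if there exist closed linear subspaces $X_0$, $X_1$ of $X$ and a convex polyhedron $D_1$ of the space $X_1$ such that $$X=X_0+X_1,\qquad X_0\cap X_1=\{0\},\qquad \dim X_1<+\infty,$$ and $$D=D_1+X_0.$$
   Context: For $x^*\in X^*$ and $x\in X$, $\langle x^*,x\rangle$ denotes the value of $x^*$ at $x$. A subset $C$ of a real locally convex Hausdorff topological vector space $Z$ is called a convex polyhedron (polyhedral convex set) of $Z$ if there exist finitely many $z_i^*\in Z^*$ and $\alpha_i\in\mathbb{R}$, $i=1,\dots,p$ ($p\ge 0$; the intersection of an empty family is $Z$), such that $C=\{z\in Z\mid \langle z_i^*,z\rangle\le\alpha_i,\ i=1,\dots,p\}$. Here $X_1$ is regarded with the topology induced from $X$, and $D_1$ being a convex polyhedron of $X_1$ means this definition with $Z=X_1$. *)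

theory Defs
  imports "HOL-Analysis.Analysis"
begin

definition lc_hausdorff_tvs :: "'a::real_vector topology \<Rightarrow> bool" where
  "lc_hausdorff_tvs T \<longleftrightarrow>
     topspace T = UNIV \<and>
     continuous_map (prod_topology T T) T (\<lambda>(x, y). x + y) \<and>
     continuous_map (prod_topology euclideanreal T) T (\<lambda>(c, x). c *\<^sub>R x) \<and>
     Hausdorff_space T \<and>
     (\<forall>U. openin T U \<and> 0 \<in> U \<longrightarrow> (\<exists>V. openin T V \<and> convex V \<and> 0 \<in> V \<and> V \<subseteq> U))"

definition linear_functional_on :: "'a::real_vector set \<Rightarrow> ('a \<Rightarrow> real) \<Rightarrow> bool" where
  "linear_functional_on Z f \<longleftrightarrow>
     (\<forall>x\<in>Z. \<forall>y\<in>Z. f (x + y) = f x + f y) \<and> (\<forall>c. \<forall>x\<in>Z. f (c *\<^sub>R x) = c * f x)"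

definition dual_on :: "'a::real_vector topology \<Rightarrow> 'a set \<Rightarrow> ('a \<Rightarrow> real) set" where
  "dual_on T Z = {f. linear_functional_on Z f \<and> continuous_map (subtopology T Z) euclideanreal f}"

definition convex_polyhedron_in :: "'a::real_vector topology \<Rightarrow> 'a set \<Rightarrow> 'a set \<Rightarrow> bool" where
  "convex_polyhedron_in T Z C \<longleftrightarrow>
     (\<exists>F :: (('a \<Rightarrow> real) \<times> real) set. finite F \<and> (\<forall>(f, \<alpha>)\<in>F. f \<in> dual_on T Z) \<and>
        C = {z \<in> Z. \<forall>(f, \<alpha>)\<in>F. f z \<le> \<alpha>})"

abbreviation convex_polyhedron :: "'a::real_vector topology \<Rightarrow> 'a set \<Rightarrow> bool" where
  "convex_polyhedron T C \<equiv> convex_polyhedron_in T UNIV C"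

end

theory Submission
  imports Defs
begin

text \<open>
  If \<open>D = {x. f\<^sub>i x \<le> \<alpha>\<^sub>i}\<close>, then \<open>D\<close> is invariant under translation by the common kernel
  \<open>X\<^sub>0\<close> of the \<open>f\<^sub>i\<close>, a closed subspace of finite codimension; for a finite-dimensional
  algebraic complement \<open>X\<^sub>1\<close> this gives \<open>D = (D \<inter> X\<^sub>1) + X\<^sub>0\<close>. Conversely, if
  \<open>D = D\<^sub>1 + X\<^sub>0\<close>, the functionals cutting out \<open>D\<^sub>1\<close> in \<open>X\<^sub>1\<close>, composed with the
  projection \<open>P\<close> onto \<open>X\<^sub>1\<close> along \<open>X\<^sub>0\<close>, cut out \<open>D\<close>.

  The topological input in both directions is the continuity of \<open>P\<close> (which also makes
  \<open>X\<^sub>1\<close>, the fixed point set of \<open>P\<close>, closed). The coordinates of \<open>P\<close> with respect to a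
  basis of \<open>X\<^sub>1\<close> are linear functionals, so it suffices to bound them on a neighbourhood of
  \<open>0\<close>. The vectors whose coefficients have sup norm \<open>1\<close> form a compact set disjoint from the
  closed set \<open>X\<^sub>0\<close>, so a convex neighbourhood \<open>V\<close> of \<open>0\<close> keeps them away from \<open>V + X\<^sub>0\<close>;
  rescaling shows that all coordinates are smaller than \<open>1\<close> on \<open>V\<close>.
\<close>

section \<open>Locally convex spaces\<close>

lemma lc_hausdorff_tvs_topspace: "lc_hausdorff_tvs T \<Longrightarrow> topspace T = UNIV"
  by (simp add: lc_hausdorff_tvs_def)

lemma continuous_map_tvs_add:
  assumes T: "lc_hausdorff_tvs T"
    and f: "continuous_map X T f" and g: "continuous_map X T g"
  shows "continuous_map X T (\<lambda>x. f x + g x)"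
proof -
  have "continuous_map (prod_topology T T) T (\<lambda>(x, y). x + y)"
    using T by (simp add: lc_hausdorff_tvs_def)
  from continuous_map_compose[OF continuous_map_pairedI[OF f g] this]
  show ?thesis by (simp add: o_def)
qed

lemma continuous_map_tvs_scaleR:
  assumes T: "lc_hausdorff_tvs T"
    and a: "continuous_map X euclideanreal a" and f: "continuous_map X T f"
  shows "continuous_map X T (\<lambda>x. a x *\<^sub>R f x)"
proof -
  have "continuous_map (prod_topology euclideanreal T) T (\<lambda>(c, x). c *\<^sub>R x)"
    using T by (simp add: lc_hausdorff_tvs_def)
  from continuous_map_compose[OF continuous_map_pairedI[OF a f] this]
  show ?thesis by (simp add: o_def)
qed

lemma continuous_map_tvs_diff:
  assumes T: "lc_hausdorff_tvs T"
    and f: "continuous_map X T f" and g: "continuous_map X T g"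
  shows "continuous_map X T (\<lambda>x. f x - g x)"
  using continuous_map_tvs_add[OF T f continuous_map_tvs_scaleR[OF T _ g, of "\<lambda>_. -1"]]
  by simp

lemma continuous_map_tvs_sum:
  assumes T: "lc_hausdorff_tvs T" and "finite I"
    and "\<And>i. i \<in> I \<Longrightarrow> continuous_map X T (f i)"
  shows "continuous_map X T (\<lambda>x. \<Sum>i\<in>I. f i x)"
  using assms(2,3)
proof (induction I rule: finite_induct)
  case empty
  then show ?case using lc_hausdorff_tvs_topspace[OF T] by simp
next
  case (insert i I)
  then show ?case
    using continuous_map_tvs_add[OF T, of X "f i" "\<lambda>x. \<Sum>i\<in>I. f i x"] by simp
qed

lemma continuous_map_tvs_translation:
  assumes T: "lc_hausdorff_tvs T"
  shows "continuous_map T T (\<lambda>x. x - a)"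
  using continuous_map_tvs_diff[OF T continuous_map_id[unfolded id_def]] T
  by (simp add: lc_hausdorff_tvs_topspace)

lemma tvs_convex_open_nbhd_base:
  assumes "lc_hausdorff_tvs T" "openin T U" "0 \<in> U"
  shows "\<exists>V. openin T V \<and> convex V \<and> 0 \<in> V \<and> V \<subseteq> U"
  using assms unfolding lc_hausdorff_tvs_def by blast

lemma tvs_convex_nbhd_diff:
  assumes T: "lc_hausdorff_tvs T" and U: "openin T U" "0 \<in> U"
  shows "\<exists>W. openin T W \<and> convex W \<and> 0 \<in> W \<and> (\<forall>w\<in>W. \<forall>w'\<in>W. w - w' \<in> U)"
proof -
  define N where "N = {z \<in> topspace (prod_topology T T). fst z - snd z \<in> U}"
  have "continuous_map (prod_topology T T) T (\<lambda>z. fst z - snd z)"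
    by (intro continuous_map_tvs_diff[OF T] continuous_map_fst continuous_map_snd)
  then have "openin (prod_topology T T) N"
    unfolding N_def using U(1) by (rule openin_continuous_map_preimage)
  moreover have "(0, 0) \<in> N"
    using U(2) lc_hausdorff_tvs_topspace[OF T] by (simp add: N_def)
  ultimately have "\<exists>A B. openin T A \<and> openin T B \<and> 0 \<in> A \<and> 0 \<in> B \<and> A \<times> B \<subseteq> N"
    unfolding openin_prod_topology_alt by simp
  then obtain A B where AB: "openin T A" "openin T B" "0 \<in> A" "0 \<in> B" "A \<times> B \<subseteq> N"
    by blast
  then obtain W where W: "openin T W" "convex W" "0 \<in> W" "W \<subseteq> A \<inter> B"
    using tvs_convex_open_nbhd_base[OF T, of "A \<inter> B"] by blast
  have "w - w' \<in> U" if "w \<in> W" "w' \<in> W" for w w'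
  proof -
    have "(w, w') \<in> N" using that W(4) AB(5) by blast
    then show ?thesis by (simp add: N_def)
  qed
  with W show ?thesis by blast
qed

lemma tvs_point_closed_separation:
  assumes T: "lc_hausdorff_tvs T" and C: "closedin T C" and k: "k \<notin> C"
  shows "\<exists>W. openin T W \<and> convex W \<and> 0 \<in> W \<and> (\<forall>w\<in>W. \<forall>w'\<in>W. k + (w - w') \<notin> C)"
proof -
  define U where "U = {u \<in> topspace T. u - (- k) \<in> topspace T - C}"
  have "openin T (topspace T - C)" using C by (simp add: closedin_def)
  then have U: "openin T U"
    unfolding U_def by (rule openin_continuous_map_preimage[OF continuous_map_tvs_translation[OF T]])
  have "0 \<in> U" using k lc_hausdorff_tvs_topspace[OF T] by (simp add: U_def)
  then obtain W where W: "openin T W" "convex W" "0 \<in> W" "\<forall>w\<in>W. \<forall>w'\<in>W. w - w' \<in> U"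
    using tvs_convex_nbhd_diff[OF T U] by blast
  have "k + (w - w') \<notin> C" if "w \<in> W" "w' \<in> W" for w w'
  proof -
    have "w - w' \<in> U" using W(4) that by blast
    then show ?thesis by (simp add: U_def add.commute)
  qed
  with W show ?thesis by blast
qed

lemma tvs_compact_closed_separation:
  assumes T: "lc_hausdorff_tvs T" and K: "compactin T K" and C: "closedin T C"
    and disj: "K \<inter> C = {}"
  obtains V where "openin T V" "convex V" "0 \<in> V"
    "\<And>k v. k \<in> K \<Longrightarrow> v \<in> V \<Longrightarrow> k - v \<notin> C"
proof -
  have ts: "topspace T = UNIV" using T by (rule lc_hausdorff_tvs_topspace)
  have "\<forall>k\<in>K. \<exists>W. openin T W \<and> convex W \<and> 0 \<in> W \<and> (\<forall>w\<in>W. \<forall>w'\<in>W. k + (w - w') \<notin> C)"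
    using tvs_point_closed_separation[OF T C] disj by blast
  from bchoice[OF this] obtain W where W: "\<forall>k\<in>K. openin T (W k) \<and> convex (W k) \<and> 0 \<in> W k \<and>
      (\<forall>w\<in>W k. \<forall>w'\<in>W k. k + (w - w') \<notin> C)"
    by blast
  then have W_open: "\<And>k. k \<in> K \<Longrightarrow> openin T (W k)"
    and W_convex: "\<And>k. k \<in> K \<Longrightarrow> convex (W k)"
    and W_0: "\<And>k. k \<in> K \<Longrightarrow> 0 \<in> W k"
    and W_sep: "\<And>k w w'. k \<in> K \<Longrightarrow> w \<in> W k \<Longrightarrow> w' \<in> W k \<Longrightarrow> k + (w - w') \<notin> C"
    by auto
  define cover where "cover k = {x \<in> topspace T. x - k \<in> W k}" for k
  have "\<exists>\<F>. finite \<F> \<and> \<F> \<subseteq> cover ` K \<and> K \<subseteq> \<Union>\<F>"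
  proof (rule compactinD[OF K])
    fix U assume "U \<in> cover ` K"
    then obtain k where "k \<in> K" "U = cover k" by blast
    then show "openin T U"
      unfolding cover_def
      by (simp add: W_open openin_continuous_map_preimage[OF continuous_map_tvs_translation[OF T]])
  next
    show "K \<subseteq> \<Union>(cover ` K)"
    proof
      fix k assume "k \<in> K"
      then have "k \<in> cover k" using W_0 ts by (simp add: cover_def)
      with \<open>k \<in> K\<close> show "k \<in> \<Union>(cover ` K)" by blast
    qed
  qed
  then obtain K' where K': "K' \<subseteq> K" "finite K'" "K \<subseteq> \<Union>(cover ` K')"
    by (metis finite_subset_image)
  define V where "V = (\<Inter>k\<in>K'. W k) \<inter> topspace T"
  show thesis
  proof
    show "openin T V" unfolding V_def using K' W_open by (intro openin_INT) auto
    show "convex V" unfolding V_def ts using K' W_convex by (auto intro!: convex_INT)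
    show "0 \<in> V" unfolding V_def ts using K' W_0 by auto
    fix k' v assume "k' \<in> K" "v \<in> V"
    then obtain k where k: "k \<in> K'" "k' - k \<in> W k" and "v \<in> W k"
      using K' by (auto simp: cover_def V_def)
    then have "k + ((k' - k) - v) \<notin> C" using W_sep K' by blast
    then show "k' - v \<notin> C" by simp
  qed
qed

lemma continuous_map_linear_functional_bounded:
  assumes T: "lc_hausdorff_tvs T" and lin: "linear \<phi>"
    and V: "openin T V" "0 \<in> V" and bnd: "\<And>x. x \<in> V \<Longrightarrow> \<bar>\<phi> x\<bar> < 1"
  shows "continuous_map T euclideanreal \<phi>"
  unfolding continuous_map
proof (intro conjI allI impI)
  show "\<phi> ` topspace T \<subseteq> topspace euclideanreal" by simp
  fix U :: "real set" assume "openin euclideanreal U"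
  then have U: "open U" by simp
  show "openin T {x \<in> topspace T. \<phi> x \<in> U}"
  proof (subst openin_subopen, intro ballI)
    fix x assume "x \<in> {x \<in> topspace T. \<phi> x \<in> U}"
    then obtain e where e: "e > 0" "ball (\<phi> x) e \<subseteq> U"
      using U open_contains_ball by blast
    define N where "N = {y \<in> topspace T. (1 / e) *\<^sub>R (y - x) \<in> V}"
    have "continuous_map T T (\<lambda>y. (1 / e) *\<^sub>R (y - x))"
      by (intro continuous_map_tvs_scaleR[OF T] continuous_map_tvs_translation[OF T]) simp
    then have "openin T N"
      unfolding N_def using V(1) by (rule openin_continuous_map_preimage)
    moreover have "x \<in> N"
      using V(2) lc_hausdorff_tvs_topspace[OF T] by (simp add: N_def)
    moreover have "N \<subseteq> {x \<in> topspace T. \<phi> x \<in> U}"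
    proof
      fix y assume y: "y \<in> N"
      then have "\<bar>\<phi> ((1 / e) *\<^sub>R (y - x))\<bar> < 1"
        using bnd by (simp add: N_def)
      moreover have "\<phi> ((1 / e) *\<^sub>R (y - x)) = (\<phi> y - \<phi> x) / e"
        using lin by (simp add: linear_scale linear_diff diff_divide_distrib)
      ultimately have "\<bar>\<phi> y - \<phi> x\<bar> < e"
        using e(1) by (simp add: abs_divide pos_divide_less_eq)
      then have "\<phi> y \<in> ball (\<phi> x) e"
        by (simp add: dist_real_def abs_minus_commute)
      then show "y \<in> {x \<in> topspace T. \<phi> x \<in> U}" using e(2) y by (auto simp: N_def)
    qed
    ultimately show "\<exists>N. openin T N \<and> x \<in> N \<and> N \<subseteq> {x \<in> topspace T. \<phi> x \<in> U}"
      by blast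
  qed
qed

section \<open>Projections along a complement\<close>

definition projection_onto_along :: "'a::real_vector set \<Rightarrow> 'a set \<Rightarrow> ('a \<Rightarrow> 'a) \<Rightarrow> bool" where
  "projection_onto_along X1 X0 P \<longleftrightarrow> (\<forall>x. P x \<in> X1 \<and> x - P x \<in> X0)"

lemma projection_onto_along_eq:
  assumes X: "subspace X0" "subspace X1" "X0 \<inter> X1 = {0}" and P: "projection_onto_along X1 X0 P"
    and x: "x1 \<in> X1" "x0 \<in> X0"
  shows "P (x1 + x0) = x1"
proof -
  have "P (x1 + x0) - x1 \<in> X1"
    using P x X(2) by (simp add: projection_onto_along_def subspace_diff)
  moreover have "P (x1 + x0) - x1 \<in> X0"
    using subspace_diff[OF X(1) x(2), of "(x1 + x0) - P (x1 + x0)"] P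
    by (simp add: projection_onto_along_def)
  ultimately show ?thesis using X(3) by (metis IntI singletonD right_minus_eq)
qed

lemma projection_onto_along_fixes:
  assumes "subspace X0" "subspace X1" "X0 \<inter> X1 = {0}" "projection_onto_along X1 X0 P" "x \<in> X1"
  shows "P x = x"
  using projection_onto_along_eq[OF assms subspace_0[OF assms(1)]] by simp

lemma projection_onto_along_vanishes:
  assumes "subspace X0" "subspace X1" "X0 \<inter> X1 = {0}" "projection_onto_along X1 X0 P" "x \<in> X0"
  shows "P x = 0"
  using projection_onto_along_eq[OF assms(1-4) subspace_0[OF assms(2)] assms(5)] by simp

lemma linear_projection_onto_along:
  assumes X: "subspace X0" "subspace X1" "X0 \<inter> X1 = {0}" and P: "projection_onto_along X1 X0 P"
  shows "linear P"
proof (rule linearI)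
  have P': "P x \<in> X1" "x - P x \<in> X0" for x
    using P by (auto simp: projection_onto_along_def)
  fix x y :: 'a and c :: real
  have "P ((P x + P y) + ((x - P x) + (y - P y))) = P x + P y"
    using P' X by (intro projection_onto_along_eq[OF X P] subspace_add)
  then show "P (x + y) = P x + P y" by simp
  have "P (c *\<^sub>R P x + c *\<^sub>R (x - P x)) = c *\<^sub>R P x"
    using P' X by (intro projection_onto_along_eq[OF X P] subspace_scale)
  then show "P (c *\<^sub>R x) = c *\<^sub>R P x" by (simp add: algebra_simps)
qed

lemma projection_onto_along_exists:
  assumes X: "subspace X0" "subspace X1" "X0 \<inter> X1 = {0}"
    and sum: "\<forall>x. \<exists>x0\<in>X0. \<exists>x1\<in>X1. x = x0 + x1"
  obtains P where "linear P" "projection_onto_along X1 X0 P"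
proof -
  have "\<exists>x1. x1 \<in> X1 \<and> x - x1 \<in> X0" for x
  proof -
    obtain x0 x1 where "x0 \<in> X0" "x1 \<in> X1" "x = x0 + x1" using sum by blast
    then show ?thesis by auto
  qed
  then obtain P where "projection_onto_along X1 X0 P"
    unfolding projection_onto_along_def by (metis choice)
  then show thesis using that linear_projection_onto_along[OF X] by blast
qed

section \<open>Continuity of projections onto finite-dimensional complements\<close>

definition sup_norm_sphere :: "'a set \<Rightarrow> ('a \<Rightarrow> real) set" where
  "sup_norm_sphere B =
     {c. (\<forall>i. i \<notin> B \<longrightarrow> c i = 0) \<and> (\<forall>i\<in>B. \<bar>c i\<bar> \<le> 1) \<and> (\<exists>i\<in>B. \<bar>c i\<bar> = 1)}"

lemma compactin_sup_norm_sphere: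
  assumes "finite B"
  shows "compactin (product_topology (\<lambda>_. euclideanreal) UNIV) (sup_norm_sphere B)"
proof -
  let ?R = "product_topology (\<lambda>_::'a. euclideanreal) UNIV"
  have box: "c \<in> PiE UNIV (\<lambda>i. if i \<in> B then {-1..1} else {0}) \<longleftrightarrow>
      (\<forall>i. i \<notin> B \<longrightarrow> c i = 0) \<and> (\<forall>i\<in>B. \<bar>c i\<bar> \<le> 1)" for c :: "'a \<Rightarrow> real"
    by (auto simp: PiE_iff abs_le_iff split: if_splits)
  have abs1: "\<bar>x\<bar> = 1 \<longleftrightarrow> x \<in> {-1, 1}" for x :: real
    by auto
  have "sup_norm_sphere B =
      (\<Union>b\<in>B. {c \<in> topspace ?R. c b \<in> {-1, 1}}) \<inter> PiE UNIV (\<lambda>i. if i \<in> B then {-1..1} else {0})"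
    unfolding sup_norm_sphere_def set_eq_iff Int_iff box by (simp add: abs1) blast
  moreover have "closedin ?R (\<Union>b\<in>B. {c \<in> topspace ?R. c b \<in> {-1, 1}})"
  proof (intro closedin_Union ballI finite_imageI assms)
    fix S assume "S \<in> (\<lambda>b. {c \<in> topspace ?R. c b \<in> {-1, 1}}) ` B"
    then obtain b where S: "S = {c \<in> topspace ?R. c b \<in> {-1, 1}}" by blast
    have "closedin ?R {c \<in> topspace ?R. c b \<in> {-1, 1}}"
      by (rule closedin_continuous_map_preimage[OF
            continuous_map_product_projection[of b UNIV "\<lambda>_. euclideanreal"]]) simp_all
    then show "closedin ?R S" unfolding S .
  qed
  moreover have "compactin ?R (PiE UNIV (\<lambda>i. if i \<in> B then {-1..1} else {0}))"
    by (simp add: compactin_PiE)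
  ultimately show ?thesis by (simp add: closed_Int_compactin)
qed

lemma compactin_sup_norm_sphere_combinations:
  assumes T: "lc_hausdorff_tvs T" and B: "finite B"
  shows "compactin T ((\<lambda>c. \<Sum>b\<in>B. c b *\<^sub>R b) ` sup_norm_sphere B)"
proof (rule image_compactin[OF compactin_sup_norm_sphere[OF B]])
  show "continuous_map (product_topology (\<lambda>_. euclideanreal) UNIV) T (\<lambda>c. \<Sum>b\<in>B. c b *\<^sub>R b)"
    using lc_hausdorff_tvs_topspace[OF T]
    by (intro continuous_map_tvs_sum[OF T B] continuous_map_tvs_scaleR[OF T]
        continuous_map_product_projection) simp_all
qed

lemma sup_norm_sphere_combination_notin:
  assumes B: "finite B" "independent B" "span B \<inter> X0 = {0}" and c: "c \<in> sup_norm_sphere B"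
  shows "(\<Sum>b\<in>B. c b *\<^sub>R b) \<notin> X0"
proof
  assume "(\<Sum>b\<in>B. c b *\<^sub>R b) \<in> X0"
  moreover have "(\<Sum>b\<in>B. c b *\<^sub>R b) \<in> span B"
    by (intro span_sum span_scale span_base)
  ultimately have "(\<Sum>b\<in>B. c b *\<^sub>R b) = 0" using B(3) by blast
  then have "\<forall>b\<in>B. c b = 0" using B(2) dependent_finite[OF B(1)] by auto
  then show False using c by (auto simp: sup_norm_sphere_def)
qed

lemma rescale_into_sup_norm_sphere:
  assumes B: "finite B" and r: "\<And>i. i \<notin> B \<Longrightarrow> r i = 0" and b: "b \<in> B" "1 \<le> \<bar>r b\<bar>"
  obtains m where "1 \<le> m" "(\<lambda>i. r i / m) \<in> sup_norm_sphere B"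
proof -
  define m where "m = Max ((\<lambda>i. \<bar>r i\<bar>) ` B)"
  have m_ge: "\<bar>r i\<bar> \<le> m" if "i \<in> B" for i
    using B that by (simp add: m_def)
  have m: "1 \<le> m" using m_ge[OF b(1)] b(2) by simp
  have "m \<in> (\<lambda>i. \<bar>r i\<bar>) ` B"
    unfolding m_def using B b(1) by (intro Max_in) auto
  then obtain i0 where i0: "i0 \<in> B" "\<bar>r i0\<bar> = m" by auto
  have "(\<lambda>i. r i / m) \<in> sup_norm_sphere B"
    unfolding sup_norm_sphere_def using r m_ge m i0
    by (auto simp: abs_divide intro!: bexI[of _ i0])
  with m show thesis by (rule that)
qed

lemma projection_coordinates_bounded_near_0:
  assumes T: "lc_hausdorff_tvs T" and X0: "subspace X0" "closedin T X0"
    and B: "finite B" "independent B" "span B \<inter> X0 = {0}"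
    and P: "projection_onto_along (span B) X0 P"
  obtains V where "openin T V" "0 \<in> V" "\<And>x b. x \<in> V \<Longrightarrow> \<bar>representation B (P x) b\<bar> < 1"
proof -
  define K where "K = (\<lambda>c. \<Sum>b\<in>B. c b *\<^sub>R b) ` sup_norm_sphere B"
  have "K \<inter> X0 = {}"
    unfolding K_def using sup_norm_sphere_combination_notin[OF B] by blast
  then obtain V where V: "openin T V" "convex V" "0 \<in> V" "\<And>k v. k \<in> K \<Longrightarrow> v \<in> V \<Longrightarrow> k - v \<notin> X0"
    using tvs_compact_closed_separation[OF T compactin_sup_norm_sphere_combinations[OF T B(1)] X0(2)]
    unfolding K_def by blast
  show thesis
  proof (rule that[OF V(1,3)])
    fix x b assume x: "x \<in> V"
    define r where "r = representation B (P x)"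
    have Px: "P x \<in> span B" "x - P x \<in> X0" using P by (auto simp: projection_onto_along_def)
    have r_supp: "r i = 0" if "i \<notin> B" for i
      using that representation_ne_zero unfolding r_def by blast
    show "\<bar>r b\<bar> < 1"
    proof (rule ccontr)
      assume "\<not> \<bar>r b\<bar> < 1"
      then have b: "b \<in> B" "1 \<le> \<bar>r b\<bar>" using r_supp by force+
      obtain m where m: "1 \<le> m" "(\<lambda>i. r i / m) \<in> sup_norm_sphere B"
        using rescale_into_sup_norm_sphere[OF B(1), of r, OF r_supp b] by blast
      txt \<open>Dividing \<open>x\<close> by the largest coordinate \<open>m\<close> of \<open>P x\<close> keeps it in \<open>V\<close> but moves
        \<open>P x\<close> onto \<open>K\<close>, contradicting the choice of \<open>V\<close>.\<close>
      have "(\<Sum>i\<in>B. (r i / m) *\<^sub>R i) \<in> K" unfolding K_def using m(2) by (rule imageI)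
      moreover have "(\<Sum>i\<in>B. (r i / m) *\<^sub>R i) = (1 / m) *\<^sub>R P x"
      proof -
        have r_sum: "(\<Sum>i\<in>B. r i *\<^sub>R i) = P x"
          unfolding r_def by (rule sum_representation_eq[OF B(2) Px(1) B(1) order_refl])
        have "(1 / m) *\<^sub>R P x = (\<Sum>i\<in>B. (1 / m) *\<^sub>R (r i *\<^sub>R i))"
          unfolding r_sum[symmetric] by (rule scaleR_sum_right)
        then show ?thesis by simp
      qed
      moreover have "(1 / m) *\<^sub>R x \<in> V"
        using convexD[OF V(2) x V(3), of "1 / m" "1 - 1 / m"] m(1) by simp
      moreover have "(1 / m) *\<^sub>R P x - (1 / m) *\<^sub>R x \<in> X0"
        using subspace_scale[OF X0(1) Px(2), of "- (1 / m)"] by (simp add: algebra_simps)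
      ultimately show False using V(4) by metis
    qed
  qed
qed

lemma continuous_map_projection_onto_span:
  assumes T: "lc_hausdorff_tvs T" and X0: "subspace X0" "closedin T X0"
    and B: "finite B" "span B \<inter> X0 = {0}"
    and P: "linear P" "projection_onto_along (span B) X0 P"
  shows "continuous_map T T P"
proof -
  obtain B' where B': "B' \<subseteq> B" "independent B'" "B \<subseteq> span B'"
    using maximal_independent_subset[of B] by blast
  have span_eq: "span B' = span B"
    using B' by (meson span_minimal subspace_span span_mono subset_antisym)
  have fin: "finite B'" using B'(1) B(1) by (rule finite_subset)
  have P': "projection_onto_along (span B') X0 P" using P(2) span_eq by simp
  have Px: "P x \<in> span B'" for x using P' by (simp add: projection_onto_along_def)
  have B'_X0: "span B' \<inter> X0 = {0}" using B(2) span_eq by simp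
  obtain V where V: "openin T V" "0 \<in> V" "\<And>x b. x \<in> V \<Longrightarrow> \<bar>representation B' (P x) b\<bar> < 1"
    using projection_coordinates_bounded_near_0[OF T X0 fin B'(2) B'_X0 P'] by metis
  have "linear (\<lambda>x. representation B' (P x) b)" for b
    by (rule linearI)
      (simp_all add: linear_add[OF P(1)] linear_scale[OF P(1)] Px
        representation_add[OF B'(2)] representation_scale[OF B'(2)])
  then have "continuous_map T euclideanreal (\<lambda>x. representation B' (P x) b)" for b
    using continuous_map_linear_functional_bounded[OF T _ V(1,2)] V(3) by blast
  then have "continuous_map T T (\<lambda>x. \<Sum>b\<in>B'. representation B' (P x) b *\<^sub>R b)"
    using lc_hausdorff_tvs_topspace[OF T]
    by (intro continuous_map_tvs_sum[OF T fin] continuous_map_tvs_scaleR[OF T]) simp_all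
  moreover have "(\<Sum>b\<in>B'. representation B' (P x) b *\<^sub>R b) = P x" for x
    by (rule sum_representation_eq[OF B'(2) Px fin order_refl])
  ultimately show ?thesis by simp
qed

lemma closedin_span_complement:
  assumes T: "lc_hausdorff_tvs T" and X0: "subspace X0" "closedin T X0"
    and B: "finite B" "span B \<inter> X0 = {0}"
    and sum: "\<forall>x. \<exists>x0\<in>X0. \<exists>x1\<in>span B. x = x0 + x1"
  shows "closedin T (span B)"
proof -
  have int: "X0 \<inter> span B = {0}" using B(2) by (simp add: Int_commute)
  obtain P where P: "linear P" "projection_onto_along (span B) X0 P"
    using projection_onto_along_exists[OF X0(1) subspace_span int sum] by blast
  have "span B = {x \<in> topspace T. P x = id x}"
  proof (intro set_eqI iffI)
    fix x assume "x \<in> span B"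
    then show "x \<in> {x \<in> topspace T. P x = id x}"
      using projection_onto_along_fixes[OF X0(1) subspace_span int P(2)]
        lc_hausdorff_tvs_topspace[OF T] by simp
  next
    fix x assume "x \<in> {x \<in> topspace T. P x = id x}"
    then have "x = P x" by simp
    then show "x \<in> span B" using P(2) unfolding projection_onto_along_def by metis
  qed
  moreover have "Hausdorff_space T" using T by (simp add: lc_hausdorff_tvs_def)
  then have "closedin T {x \<in> topspace T. P x = id x}"
    using closedin_continuous_maps_eq continuous_map_projection_onto_span[OF T X0 B P]
      continuous_map_id by blast
  ultimately show ?thesis by simp
qed

section \<open>Common kernels of finitely many functionals\<close>

lemma subspace_common_kernel:
  assumes "\<And>f. f \<in> G \<Longrightarrow> linear f"
  shows "subspace {x. \<forall>f\<in>G. f x = 0}"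
  using assms by (auto simp: subspace_def linear_0 linear_add linear_scale)

lemma closedin_common_kernel:
  assumes T: "lc_hausdorff_tvs T" and G: "\<And>f. f \<in> G \<Longrightarrow> continuous_map T euclideanreal f"
  shows "closedin T {x. \<forall>f\<in>G. f x = 0}"
proof -
  have "{x. \<forall>f\<in>G. f x = 0} = \<Inter>(insert (topspace T) ((\<lambda>f. {x \<in> topspace T. f x \<in> {0}}) ` G))"
    using lc_hausdorff_tvs_topspace[OF T] by auto
  also have "closedin T \<dots>"
  proof (rule closedin_Inter)
    fix S assume "S \<in> insert (topspace T) ((\<lambda>f. {x \<in> topspace T. f x \<in> {0}}) ` G)"
    then show "closedin T S"
      using closedin_continuous_map_preimage[OF G, of _ "{0}"] by auto
  qed simp
  finally show ?thesis .
qed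

lemma finite_complement_of_kernel_in_subspace:
  fixes g :: "'a::real_vector \<Rightarrow> real"
  assumes Z: "subspace Z" and g: "linear g"
    and B: "finite B" "span B \<inter> Z = {0}" and sum: "\<forall>x. \<exists>z\<in>Z. \<exists>y\<in>span B. x = z + y"
  shows "\<exists>B'. finite B' \<and> span B' \<inter> {z \<in> Z. g z = 0} = {0} \<and>
    (\<forall>x. \<exists>z\<in>{z \<in> Z. g z = 0}. \<exists>y\<in>span B'. x = z + y)"
proof (cases "\<exists>b\<in>Z. g b \<noteq> 0")
  case False
  then have "{z \<in> Z. g z = 0} = Z" by auto
  then show ?thesis using B sum by (intro exI[of _ B]) simp
next
  case True
  then obtain b0 where b0: "b0 \<in> Z" "g b0 \<noteq> 0" by blast
  define b where "b = (1 / g b0) *\<^sub>R b0"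
  have bZ: "b \<in> Z" unfolding b_def using Z b0(1) by (rule subspace_scale)
  have gb: "g b = 1" using b0(2) by (simp add: b_def linear_scale[OF g])
  have "span (insert b B) \<inter> {z \<in> Z. g z = 0} = {0}"
  proof
    show "span (insert b B) \<inter> {z \<in> Z. g z = 0} \<subseteq> {0}"
    proof
      fix v assume v: "v \<in> span (insert b B) \<inter> {z \<in> Z. g z = 0}"
      then obtain t where "v - t *\<^sub>R b \<in> span B"
        by (auto simp: span_breakdown_eq)
      moreover have "v - t *\<^sub>R b \<in> Z"
        using v by (intro subspace_diff[OF Z] subspace_scale[OF Z bZ]) simp
      ultimately have "v - t *\<^sub>R b \<in> span B \<inter> Z" by (rule IntI)
      then have vt: "v = t *\<^sub>R b" using B(2) by simp
      then have "t = 0" using v gb by (simp add: linear_scale[OF g])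
      then show "v \<in> {0}" using vt by simp
    qed
    show "{0} \<subseteq> span (insert b B) \<inter> {z \<in> Z. g z = 0}"
      using Z g by (simp add: span_zero subspace_0 linear_0)
  qed
  moreover have "\<exists>z\<in>{z \<in> Z. g z = 0}. \<exists>y\<in>span (insert b B). x = z + y" for x
  proof -
    obtain z y where zy: "z \<in> Z" "y \<in> span B" "x = z + y" using sum by blast
    have "z - g z *\<^sub>R b \<in> {z \<in> Z. g z = 0}"
      using subspace_diff[OF Z zy(1) subspace_scale[OF Z bZ]] gb
      by (simp add: linear_diff[OF g] linear_scale[OF g])
    moreover have "y + g z *\<^sub>R b \<in> span (insert b B)"
      using zy(2) by (intro span_add span_scale) (auto intro: span_base span_mono[THEN subsetD])
    moreover have "x = (z - g z *\<^sub>R b) + (y + g z *\<^sub>R b)" using zy(3) by simp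
    ultimately show ?thesis by blast
  qed
  ultimately show ?thesis using B(1) by (intro exI[of _ "insert b B"]) simp
qed

lemma common_kernel_finite_complement:
  fixes G :: "('a::real_vector \<Rightarrow> real) set"
  assumes "finite G" "\<And>f. f \<in> G \<Longrightarrow> linear f"
  shows "\<exists>B. finite B \<and> span B \<inter> {x. \<forall>f\<in>G. f x = 0} = {0} \<and>
    (\<forall>x. \<exists>x0\<in>{x. \<forall>f\<in>G. f x = 0}. \<exists>x1\<in>span B. x = x0 + x1)"
  using assms
proof (induction G rule: finite_induct)
  case empty
  show ?case by (intro exI[of _ "{}"]) auto
next
  case (insert g G)
  let ?Z = "{x. \<forall>f\<in>G. f x = 0}"
  have "\<exists>B. finite B \<and> span B \<inter> ?Z = {0} \<and> (\<forall>x. \<exists>x0\<in>?Z. \<exists>x1\<in>span B. x = x0 + x1)"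
    using insert.prems by (intro insert.IH) auto
  then obtain B where B: "finite B" "span B \<inter> ?Z = {0}" "\<forall>x. \<exists>x0\<in>?Z. \<exists>x1\<in>span B. x = x0 + x1"
    by blast
  have kernel_eq: "{x. \<forall>f\<in>insert g G. f x = 0} = {z \<in> ?Z. g z = 0}" by auto
  show ?case
    unfolding kernel_eq
  proof (rule finite_complement_of_kernel_in_subspace[OF _ _ B])
    show "subspace ?Z" using insert.prems by (intro subspace_common_kernel) auto
    show "linear g" using insert.prems by auto
  qed
qed

section \<open>Convex polyhedra\<close>

lemma dual_on_UNIV_iff:
  "f \<in> dual_on T UNIV \<longleftrightarrow> linear f \<and> continuous_map T euclideanreal f"
  unfolding dual_on_def linear_functional_on_def
  by (auto intro: linearI simp: linear_add linear_scale)

lemma dual_on_UNIV_imp_dual_on: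
  "f \<in> dual_on T UNIV \<Longrightarrow> f \<in> dual_on T Z"
  unfolding dual_on_def linear_functional_on_def by (auto intro: continuous_map_from_subtopology)

lemma dual_on_compose_projection:
  assumes T: "lc_hausdorff_tvs T" and g: "g \<in> dual_on T X1"
    and P: "linear P" "continuous_map T T P" "\<And>x. P x \<in> X1"
  shows "g \<circ> P \<in> dual_on T UNIV"
proof -
  have g_lin: "linear_functional_on X1 g" and g_cont: "continuous_map (subtopology T X1) euclideanreal g"
    using g by (auto simp: dual_on_def)
  have "linear (g \<circ> P)"
    using g_lin P(3) unfolding linear_functional_on_def
    by (intro linearI) (simp_all add: linear_add[OF P(1)] linear_scale[OF P(1)])
  moreover have "continuous_map T (subtopology T X1) P"
    using P(2,3) by (simp add: continuous_map_into_subtopology)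
  then have "continuous_map T euclideanreal (g \<circ> P)"
    using g_cont by (rule continuous_map_compose)
  ultimately show ?thesis by (simp add: dual_on_UNIV_iff)
qed

lemma halfspace_system_eq_section_plus_subspace:
  assumes lin: "\<And>f \<alpha>. (f, \<alpha>) \<in> F \<Longrightarrow> linear f"
    and vanish: "\<And>f \<alpha> x. (f, \<alpha>) \<in> F \<Longrightarrow> x \<in> X0 \<Longrightarrow> f x = 0"
    and sum: "\<forall>x. \<exists>x0\<in>X0. \<exists>x1\<in>X1. x = x0 + x1"
  shows "{x. \<forall>(f, \<alpha>)\<in>F. f x \<le> \<alpha>} =
    {d1 + x0 | d1 x0. d1 \<in> {z \<in> X1. \<forall>(f, \<alpha>)\<in>F. f z \<le> \<alpha>} \<and> x0 \<in> X0}"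
proof -
  have shift: "f (d + x0) = f d" if "(f, \<alpha>) \<in> F" "x0 \<in> X0" for f \<alpha> d x0
    using that lin vanish by (simp add: linear_add)
  show ?thesis
  proof (intro set_eqI iffI)
    fix x assume x: "x \<in> {x. \<forall>(f, \<alpha>)\<in>F. f x \<le> \<alpha>}"
    obtain x0 x1 where x01: "x0 \<in> X0" "x1 \<in> X1" "x = x1 + x0"
      using sum by (metis add.commute)
    then have "x1 \<in> {z \<in> X1. \<forall>(f, \<alpha>)\<in>F. f z \<le> \<alpha>}"
      using x shift by fastforce
    with x01 show "x \<in> {d1 + x0 | d1 x0. d1 \<in> {z \<in> X1. \<forall>(f, \<alpha>)\<in>F. f z \<le> \<alpha>} \<and> x0 \<in> X0}"
      by blast
  next
    fix x assume "x \<in> {d1 + x0 | d1 x0. d1 \<in> {z \<in> X1. \<forall>(f, \<alpha>)\<in>F. f z \<le> \<alpha>} \<and> x0 \<in> X0}"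
    then obtain d1 x0 where "d1 \<in> X1" "\<forall>(f, \<alpha>)\<in>F. f d1 \<le> \<alpha>" "x0 \<in> X0" "x = d1 + x0"
      by blast
    then show "x \<in> {x. \<forall>(f, \<alpha>)\<in>F. f x \<le> \<alpha>}" using shift by fastforce
  qed
qed

lemma convex_polyhedron_decomposition:
  assumes T: "lc_hausdorff_tvs T" and D: "convex_polyhedron T D"
  obtains B X0 D1 where "finite B" "subspace X0" "closedin T X0" "closedin T (span B)"
    "span B \<inter> X0 = {0}" "\<forall>x. \<exists>x0\<in>X0. \<exists>x1\<in>span B. x = x0 + x1"
    "convex_polyhedron_in T (span B) D1" "D = {d1 + x0 | d1 x0. d1 \<in> D1 \<and> x0 \<in> X0}"
proof -
  obtain F where F: "finite F" "\<forall>(f, \<alpha>)\<in>F. f \<in> dual_on T UNIV"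
    and D_eq: "D = {z \<in> UNIV. \<forall>(f, \<alpha>)\<in>F. f z \<le> \<alpha>}"
    using D unfolding convex_polyhedron_in_def by blast
  have lin: "linear f" and cont: "continuous_map T euclideanreal f" if "f \<in> fst ` F" for f
    using that F(2) by (auto simp: dual_on_UNIV_iff)
  define X0 where "X0 = {x. \<forall>f\<in>fst ` F. f x = 0}"
  obtain B where B: "finite B" "span B \<inter> X0 = {0}" "\<forall>x. \<exists>x0\<in>X0. \<exists>x1\<in>span B. x = x0 + x1"
    using common_kernel_finite_complement[of "fst ` F"] F(1) lin unfolding X0_def by blast
  have X0: "subspace X0" "closedin T X0"
    unfolding X0_def using lin cont
    by (blast intro: subspace_common_kernel, blast intro: closedin_common_kernel[OF T])
  define D1 where "D1 = {z \<in> span B. \<forall>(f, \<alpha>)\<in>F. f z \<le> \<alpha>}"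
  have "convex_polyhedron_in T (span B) D1"
    unfolding convex_polyhedron_in_def D1_def
    using F(1,2) by (intro exI[of _ F]) (auto intro: dual_on_UNIV_imp_dual_on)
  moreover have "{x. \<forall>(f, \<alpha>)\<in>F. f x \<le> \<alpha>} = {d1 + x0 | d1 x0. d1 \<in> D1 \<and> x0 \<in> X0}"
    unfolding D1_def
  proof (rule halfspace_system_eq_section_plus_subspace[OF _ _ B(3)])
    fix f \<alpha> assume "(f, \<alpha>) \<in> F"
    then have f: "f \<in> fst ` F" by force
    then show "linear f" by (rule lin)
    fix x assume "x \<in> X0"
    then show "f x = 0" using f unfolding X0_def by blast
  qed
  ultimately show thesis
    using that[OF B(1) X0 closedin_span_complement[OF T X0 B] B(2,3)] D_eq by simp
qed

lemma convex_polyhedron_of_decomposition: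
  assumes T: "lc_hausdorff_tvs T" and X0: "subspace X0" "closedin T X0" and B: "finite B"
    and compl: "span B \<inter> X0 = {0}" "\<forall>x. \<exists>x0\<in>X0. \<exists>x1\<in>span B. x = x0 + x1"
    and D1: "convex_polyhedron_in T (span B) D1"
  shows "convex_polyhedron T {d1 + x0 | d1 x0. d1 \<in> D1 \<and> x0 \<in> X0}"
proof -
  obtain G where G: "finite G" "\<forall>(g, \<beta>)\<in>G. g \<in> dual_on T (span B)"
    and D1_eq: "D1 = {z \<in> span B. \<forall>(g, \<beta>)\<in>G. g z \<le> \<beta>}"
    using D1 unfolding convex_polyhedron_in_def by blast
  have int: "X0 \<inter> span B = {0}" using compl(1) by (simp add: Int_commute)
  obtain P where P: "linear P" "projection_onto_along (span B) X0 P"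
    using projection_onto_along_exists[OF X0(1) subspace_span int compl(2)] by blast
  have P_cont: "continuous_map T T P"
    by (rule continuous_map_projection_onto_span[OF T X0 B compl(1) P])
  have P_span: "P x \<in> span B" for x using P(2) by (simp add: projection_onto_along_def)
  note P_fixes = projection_onto_along_fixes[OF X0(1) subspace_span int P(2)]
  note P_vanishes = projection_onto_along_vanishes[OF X0(1) subspace_span int P(2)]
  define F where "F = (\<lambda>(g, \<beta>). (g \<circ> P, \<beta>)) ` G"
  have F_dual: "\<forall>(f, \<alpha>)\<in>F. f \<in> dual_on T UNIV"
    using G(2) dual_on_compose_projection[OF T _ P(1) P_cont P_span] by (auto simp: F_def)
  have "{z \<in> span B. \<forall>(f, \<alpha>)\<in>F. f z \<le> \<alpha>} = D1"
    using P_fixes by (auto simp: F_def D1_eq)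
  moreover have "{x. \<forall>(f, \<alpha>)\<in>F. f x \<le> \<alpha>} =
      {d1 + x0 | d1 x0. d1 \<in> {z \<in> span B. \<forall>(f, \<alpha>)\<in>F. f z \<le> \<alpha>} \<and> x0 \<in> X0}"
  proof (rule halfspace_system_eq_section_plus_subspace[OF _ _ compl(2)])
    fix f \<alpha> assume f: "(f, \<alpha>) \<in> F"
    then show lin_f: "linear f" using F_dual by (auto simp: dual_on_UNIV_iff)
    fix x assume "x \<in> X0"
    then have "P x = P 0" using P_vanishes subspace_0[OF X0(1)] by simp
    moreover obtain g where "f = g \<circ> P" using f by (auto simp: F_def)
    ultimately have "f x = f 0" by simp
    then show "f x = 0" using lin_f by (simp add: linear_0)
  qed
  ultimately show ?thesis
    unfolding convex_polyhedron_in_def using G(1) F_dual by (intro exI[of _ F]) (auto simp: F_def)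
qed

theorem proposition2p6:
  fixes T :: "'a::real_vector topology" and D :: "'a set"
  assumes "lc_hausdorff_tvs T"
    and "D \<noteq> {}"
  shows "convex_polyhedron T D \<longleftrightarrow>
    (\<exists>X0 X1 D1.
       subspace X0 \<and> closedin T X0 \<and> subspace X1 \<and> closedin T X1 \<and>
       convex_polyhedron_in T X1 D1 \<and>
       (\<forall>x. \<exists>x0\<in>X0. \<exists>x1\<in>X1. x = x0 + x1) \<and>
       X0 \<inter> X1 = {0} \<and>
       (\<exists>B. finite B \<and> X1 = span B) \<and>
       D = {d1 + x0 | d1 x0. d1 \<in> D1 \<and> x0 \<in> X0})"
    (is "_ \<longleftrightarrow> (\<exists>X0 X1 D1. ?decomposition X0 X1 D1)")
proof
  assume "convex_polyhedron T D"
  then obtain B X0 D1 where "finite B" "subspace X0" "closedin T X0" "closedin T (span B)"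
    "span B \<inter> X0 = {0}" "\<forall>x. \<exists>x0\<in>X0. \<exists>x1\<in>span B. x = x0 + x1"
    "convex_polyhedron_in T (span B) D1" "D = {d1 + x0 | d1 x0. d1 \<in> D1 \<and> x0 \<in> X0}"
    by (rule convex_polyhedron_decomposition[OF assms(1)])
  then have "?decomposition X0 (span B) D1"
    by (simp add: subspace_span Int_commute) blast
  then show "\<exists>X0 X1 D1. ?decomposition X0 X1 D1" by blast
next
  assume "\<exists>X0 X1 D1. ?decomposition X0 X1 D1"
  then obtain X0 B D1 where "subspace X0" "closedin T X0" "finite B"
    "convex_polyhedron_in T (span B) D1" "\<forall>x. \<exists>x0\<in>X0. \<exists>x1\<in>span B. x = x0 + x1"
    "span B \<inter> X0 = {0}" "D = {d1 + x0 | d1 x0. d1 \<in> D1 \<and> x0 \<in> X0}"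
    by (auto simp: Int_commute)
  then show "convex_polyhedron T D"
    using convex_polyhedron_of_decomposition[OF assms(1)] by simp
qed

end
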